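(* Let $\rho=\mathrm{WC}$ on $L=L^1$, where $\mathrm{WC}(X):=\operatorname{ess\,sup}(-X)$. Then the market admits $\mathrm{WC}$-arbitrage if and only if it admits arbitrage of the first kind, and it admits strong $\mathrm{WC}$-arbitrage if and only if it admits arbitrage of the second kind.
   Context: Let $(\Omega,\mathcal{F},\mathbb{P})$ be a probability space and a market: riskless asset $S^0_0=1$, $S^0_1=1+r$, $r>-1$; risky assets $S^1,\dots,S^d$ with constants $S^i_0>0$ and real-valued $\mathcal{F}$-measurable $S^i_1$; returns $R^i:=(S^i_1-S^i_0)/S^i_0$. Standing assumptions: nonredundancy (if $\theta\in\mathbb{R}^{1+d}$ with $\sum_{i=0}^d\theta^iS^i_t=0$ a.s. for $t\in\{0,1\}$ then $\theta=0$), $R^i\in L^1$, $\mathbb{E}[R^i]\ne r$ for some $i$. Excess return of $\pi\in\mathbb{R}^d$: $X_\pi:=\pi\cdot(R-r\mathbf{1})$. $\pi$ is $\rho$-efficient if $\mathbb{E}[X_\pi]\ge0$ and no $\pi'$ has $\mathbb{E}[X_{\pi'}]\ge\mathbb{E}[X_\pi]$ and $\rho(X_{\pi'})\le\rho(X_\pi)$ with one inequality strict; $\rho$-arbitrage: no $\rho$-efficient portfolio exists; strong $\rho$-arbitrage: for every $\pi$ there is $\pi'$ with $\mathbb{E}[X_{\pi'}]>\mathbb{E}[X_\pi]$ and $\rho(X_{\pi'})<\rho(X_\pi)$. Arbitrage of the first kind: $(\theta^0,\theta)\in\mathbb{R}^{1+d}$ with $\theta^0S^0_0+\theta\cdot S_0\le0$,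 $\theta^0S^0_1+\theta\cdot S_1\ge0$ a.s., $\mathbb{P}[\theta^0S^0_1+\theta\cdot S_1>0]>0$. Arbitrage of the second kind: $(\theta^0,\theta)$ with $\theta^0S^0_0+\theta\cdot S_0<0$ and $\theta^0S^0_1+\theta\cdot S_1\ge0$ a.s. *)

theory Defs
  imports "HOL-Probability.Probability"
begin

text \<open>Market: riskless asset with S^0_0 = 1, S^0_1 = 1 + r; risky assets indexed by a
  finite type 'd, with initial prices S0 i > 0 and terminal prices S1 i (random variables).\<close>

definition ret :: "('d \<Rightarrow> real) \<Rightarrow> ('d \<Rightarrow> 'a \<Rightarrow> real) \<Rightarrow> 'd \<Rightarrow> 'a \<Rightarrow> real" where
  "ret S0 S1 i \<omega> = (S1 i \<omega> - S0 i) / S0 i"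

definition excess :: "real \<Rightarrow> ('d::finite \<Rightarrow> real) \<Rightarrow> ('d \<Rightarrow> 'a \<Rightarrow> real) \<Rightarrow> ('d \<Rightarrow> real) \<Rightarrow> 'a \<Rightarrow> real" where
  "excess r S0 S1 \<pi> \<omega> = (\<Sum>i\<in>UNIV. \<pi> i * (ret S0 S1 i \<omega> - r))"

definition WC :: "'a measure \<Rightarrow> ('a \<Rightarrow> real) \<Rightarrow> ereal" where
  "WC M X = esssup M (\<lambda>\<omega>. ereal (- X \<omega>))"

definition rho_efficient ::
  "'a measure \<Rightarrow> (('a \<Rightarrow> real) \<Rightarrow> ereal) \<Rightarrow> real \<Rightarrow> ('d::finite \<Rightarrow> real) \<Rightarrow> ('d \<Rightarrow> 'a \<Rightarrow> real) \<Rightarrow> ('d \<Rightarrow> real) \<Rightarrow> bool" where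
  "rho_efficient M \<rho> r S0 S1 \<pi> \<longleftrightarrow>
     0 \<le> integral\<^sup>L M (excess r S0 S1 \<pi>) \<and>
     \<not> (\<exists>\<pi>'. integral\<^sup>L M (excess r S0 S1 \<pi>') \<ge> integral\<^sup>L M (excess r S0 S1 \<pi>) \<and>
              \<rho> (excess r S0 S1 \<pi>') \<le> \<rho> (excess r S0 S1 \<pi>) \<and>
              (integral\<^sup>L M (excess r S0 S1 \<pi>') > integral\<^sup>L M (excess r S0 S1 \<pi>) \<or>
               \<rho> (excess r S0 S1 \<pi>') < \<rho> (excess r S0 S1 \<pi>)))"

definition rho_arbitrage ::
  "'a measure \<Rightarrow> (('a \<Rightarrow> real) \<Rightarrow> ereal) \<Rightarrow> real \<Rightarrow> ('d::finite \<Rightarrow> real) \<Rightarrow> ('d \<Rightarrow> 'a \<Rightarrow> real) \<Rightarrow> bool" where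
  "rho_arbitrage M \<rho> r S0 S1 \<longleftrightarrow> \<not> (\<exists>\<pi>. rho_efficient M \<rho> r S0 S1 \<pi>)"

definition strong_rho_arbitrage ::
  "'a measure \<Rightarrow> (('a \<Rightarrow> real) \<Rightarrow> ereal) \<Rightarrow> real \<Rightarrow> ('d::finite \<Rightarrow> real) \<Rightarrow> ('d \<Rightarrow> 'a \<Rightarrow> real) \<Rightarrow> bool" where
  "strong_rho_arbitrage M \<rho> r S0 S1 \<longleftrightarrow>
     (\<forall>\<pi>. \<exists>\<pi>'. integral\<^sup>L M (excess r S0 S1 \<pi>') > integral\<^sup>L M (excess r S0 S1 \<pi>) \<and>
              \<rho> (excess r S0 S1 \<pi>') < \<rho> (excess r S0 S1 \<pi>))"

definition arbitrage_first_kind ::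
  "'a measure \<Rightarrow> real \<Rightarrow> ('d::finite \<Rightarrow> real) \<Rightarrow> ('d \<Rightarrow> 'a \<Rightarrow> real) \<Rightarrow> bool" where
  "arbitrage_first_kind M r S0 S1 \<longleftrightarrow>
     (\<exists>\<theta>0 \<theta>. \<theta>0 * 1 + (\<Sum>i\<in>UNIV. \<theta> i * S0 i) \<le> 0 \<and>
        (AE \<omega> in M. \<theta>0 * (1 + r) + (\<Sum>i\<in>UNIV. \<theta> i * S1 i \<omega>) \<ge> 0) \<and>
        measure M {\<omega> \<in> space M. \<theta>0 * (1 + r) + (\<Sum>i\<in>UNIV. \<theta> i * S1 i \<omega>) > 0} > 0)"

definition arbitrage_second_kind ::
  "'a measure \<Rightarrow> real \<Rightarrow> ('d::finite \<Rightarrow> real) \<Rightarrow> ('d \<Rightarrow> 'a \<Rightarrow> real) \<Rightarrow> bool" where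
  "arbitrage_second_kind M r S0 S1 \<longleftrightarrow>
     (\<exists>\<theta>0 \<theta>. \<theta>0 * 1 + (\<Sum>i\<in>UNIV. \<theta> i * S0 i) < 0 \<and>
        (AE \<omega> in M. \<theta>0 * (1 + r) + (\<Sum>i\<in>UNIV. \<theta> i * S1 i \<omega>) \<ge> 0))"

definition nonredundant ::
  "'a measure \<Rightarrow> real \<Rightarrow> ('d::finite \<Rightarrow> real) \<Rightarrow> ('d \<Rightarrow> 'a \<Rightarrow> real) \<Rightarrow> bool" where
  "nonredundant M r S0 S1 \<longleftrightarrow>
     (\<forall>\<theta>0 \<theta>. \<theta>0 * 1 + (\<Sum>i\<in>UNIV. \<theta> i * S0 i) = 0 \<and>
        (AE \<omega> in M. \<theta>0 * (1 + r) + (\<Sum>i\<in>UNIV. \<theta> i * S1 i \<omega>) = 0)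
        \<longrightarrow> \<theta>0 = 0 \<and> (\<forall>i. \<theta> i = 0))"

end

(* A portfolio \<pi> corresponds to the strategy holding \<pi> i / S0 i units of risky asset i, and its
   excess return X_\<pi> is the terminal value of that strategy minus (1 + r) times its initial value.
   Hence arbitrage of the first kind means that some X_\<psi> is a.s. nonnegative but not a.s. zero,
   and arbitrage of the second kind that some X_\<psi> is a.s. at least a constant c > 0, which is
   exactly WC(X_\<psi>) < 0.
   Adding a first-kind \<psi> to any portfolio raises the mean without raising WC, so nothing is
   efficient; conversely a portfolio dominating the zero portfolio is a first-kind arbitrage.
   Scaling a second-kind \<psi> by a large factor pushes its mean above, and its WC below, those of
   any given portfolio, since WC never takes the value -\<infinity> on a probability space. *)

theory Submission
  imports Defs
begin

lemma (in finite_measure) measure_pos_iff_not_AE_le: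
  fixes f :: "'a \<Rightarrow> real"
  assumes [measurable]: "f \<in> borel_measurable M"
  shows "measure M {\<omega> \<in> space M. f \<omega> > 0} > 0 \<longleftrightarrow> \<not> (AE \<omega> in M. f \<omega> \<le> 0)"
proof -
  have "(AE \<omega> in M. f \<omega> \<le> 0) \<longleftrightarrow> emeasure M {\<omega> \<in> space M. f \<omega> > 0} = 0"
    by (rule AE_iff_measurable) (auto simp: not_le)
  then show ?thesis
    by (simp add: emeasure_eq_measure zero_less_measure_iff)
qed

lemma integral_pos_of_AE_nonneg:
  fixes f :: "'a \<Rightarrow> real"
  assumes "integrable M f" "AE \<omega> in M. f \<omega> \<ge> 0" "\<not> (AE \<omega> in M. f \<omega> \<le> 0)"
  shows "integral\<^sup>L M f > 0"
proof -
  have "\<not> (AE \<omega> in M. f \<omega> = 0)"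
    using assms(3) by (metis (mono_tags, lifting) eventually_mono order_refl)
  then have "integral\<^sup>L M f \<noteq> 0"
    using integral_nonneg_eq_0_iff_AE[OF assms(1,2)] by simp
  with integral_nonneg_AE[OF assms(2)] show ?thesis by linarith
qed

lemma AE_ge_of_WC_le:
  assumes "WC M X \<le> ereal w"
  shows "AE \<omega> in M. X \<omega> \<ge> - w"
  using esssup_AE[where M = M and f = "\<lambda>\<omega>. ereal (- X \<omega>)"]
proof eventually_elim
  case (elim \<omega>)
  then have "ereal (- X \<omega>) \<le> ereal w"
    using assms unfolding WC_def by (rule order_trans)
  then show ?case by simp
qed

lemma WC_le_iff:
  assumes "X \<in> borel_measurable M"
  shows "WC M X \<le> ereal w \<longleftrightarrow> (AE \<omega> in M. X \<omega> \<ge> - w)"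
  using AE_ge_of_WC_le assms by (auto simp: WC_def intro!: esssup_I elim: eventually_mono)

lemma WC_nonpos_iff:
  assumes "X \<in> borel_measurable M"
  shows "WC M X \<le> 0 \<longleftrightarrow> (AE \<omega> in M. X \<omega> \<ge> 0)"
  using WC_le_iff[OF assms, of 0] by (simp add: zero_ereal_def)

lemma WC_neg_iff:
  assumes "X \<in> borel_measurable M"
  shows "WC M X < 0 \<longleftrightarrow> (\<exists>c>0. AE \<omega> in M. X \<omega> \<ge> c)"
proof
  assume "WC M X < 0"
  then obtain z where "WC M X < ereal z" "z < 0"
    using ereal_dense2 by fastforce
  then show "\<exists>c>0. AE \<omega> in M. X \<omega> \<ge> c"
    using AE_ge_of_WC_le[of M X z] by (intro exI[of _ "- z"]) auto
next
  assume "\<exists>c>0. AE \<omega> in M. X \<omega> \<ge> c"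
  then obtain c where "c > 0" "AE \<omega> in M. X \<omega> \<ge> c" by auto
  then have "WC M X \<le> ereal (- c)" using WC_le_iff[OF assms, of "- c"] by simp
  also have "\<dots> < 0" using \<open>c > 0\<close> by simp
  finally show "WC M X < 0" .
qed

lemma WC_mono_AE:
  assumes "Y \<in> borel_measurable M" "AE \<omega> in M. X \<omega> \<le> Y \<omega>"
  shows "WC M Y \<le> WC M X"
  unfolding WC_def using assms by (intro esssup_AE_mono) (auto elim: eventually_mono)

lemma (in prob_space) WC_const: "WC M (\<lambda>_. c) = ereal (- c)"
  unfolding WC_def by (rule esssup_const) (simp add: emeasure_space_1)

lemma (in prob_space) WC_gt_MInf: "WC M X > -\<infinity>"
proof (rule ccontr)
  assume "\<not> WC M X > -\<infinity>"
  then have "AE \<omega> in M. False"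
    using esssup_AE[where M = M and f = "\<lambda>\<omega>. ereal (- X \<omega>)"] by (simp add: WC_def)
  then show False by simp
qed

text \<open>The factor \<open>1\<close> is the riskless asset's initial price; keeping it makes the abbreviation
  match \<open>arbitrage_first_kind_def\<close> and \<open>arbitrage_second_kind_def\<close> literally.\<close>
abbreviation initial_value :: "('d::finite \<Rightarrow> real) \<Rightarrow> real \<Rightarrow> ('d \<Rightarrow> real) \<Rightarrow> real" where
  "initial_value S0 \<theta>0 \<theta> \<equiv> \<theta>0 * 1 + (\<Sum>i\<in>UNIV. \<theta> i * S0 i)"

abbreviation terminal_value ::
  "real \<Rightarrow> ('d::finite \<Rightarrow> 'a \<Rightarrow> real) \<Rightarrow> real \<Rightarrow> ('d \<Rightarrow> real) \<Rightarrow> 'a \<Rightarrow> real" where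
  "terminal_value r S1 \<theta>0 \<theta> \<omega> \<equiv> \<theta>0 * (1 + r) + (\<Sum>i\<in>UNIV. \<theta> i * S1 i \<omega>)"

lemma excess_zero: "excess r S0 S1 (\<lambda>_. 0) = (\<lambda>_. 0)"
  by (simp add: excess_def fun_eq_iff)

lemma excess_add:
  "excess r S0 S1 (\<lambda>i. \<pi> i + \<pi>' i) = (\<lambda>\<omega>. excess r S0 S1 \<pi> \<omega> + excess r S0 S1 \<pi>' \<omega>)"
  unfolding excess_def by (simp add: fun_eq_iff distrib_right sum.distrib)

lemma excess_scale: "excess r S0 S1 (\<lambda>i. c * \<pi> i) = (\<lambda>\<omega>. c * excess r S0 S1 \<pi> \<omega>)"
  unfolding excess_def by (simp add: fun_eq_iff sum_distrib_left mult.assoc)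

lemma excess_eq_value_gain:
  assumes "\<And>i. S0 i \<noteq> 0"
  shows "excess r S0 S1 \<pi> \<omega> = terminal_value r S1 \<theta>0 (\<lambda>i. \<pi> i / S0 i) \<omega>
    - (1 + r) * initial_value S0 \<theta>0 (\<lambda>i. \<pi> i / S0 i)"
proof -
  have "\<pi> i * (ret S0 S1 i \<omega> - r) = \<pi> i / S0 i * S1 i \<omega> - (1 + r) * (\<pi> i / S0 i * S0 i)" for i
    using assms[of i] unfolding ret_def by (simp add: field_simps)
  then have "excess r S0 S1 \<pi> \<omega>
      = (\<Sum>i\<in>UNIV. \<pi> i / S0 i * S1 i \<omega>) - (1 + r) * (\<Sum>i\<in>UNIV. \<pi> i / S0 i * S0 i)"
    unfolding excess_def by (simp add: sum_subtractf sum_distrib_left)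
  then show ?thesis by (simp add: algebra_simps)
qed

locale one_period_market = prob_space M
  for M :: "'a measure" +
  fixes r :: real and S0 :: "'d::finite \<Rightarrow> real" and S1 :: "'d \<Rightarrow> 'a \<Rightarrow> real"
  assumes rate_gt_minus_one: "r > -1"
    and initial_prices_pos: "S0 i > 0"
    and terminal_prices_measurable [measurable]: "S1 i \<in> borel_measurable M"
    and returns_integrable: "integrable M (ret S0 S1 i)"
begin

lemma excess_measurable [measurable]: "excess r S0 S1 \<pi> \<in> borel_measurable M"
  unfolding excess_def ret_def by measurable

lemma integrable_excess: "integrable M (excess r S0 S1 \<pi>)"
  unfolding excess_def
  by (auto intro!: integrable_sum integrable_mult_right integrable_diff returns_integrable)

lemma initial_prices_nonzero: "S0 i \<noteq> 0"
  using initial_prices_pos[of i] by simp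

lemma excess_of_strategy:
  "excess r S0 S1 (\<lambda>i. \<theta> i * S0 i) \<omega>
    = terminal_value r S1 \<theta>0 \<theta> \<omega> - (1 + r) * initial_value S0 \<theta>0 \<theta>"
  using excess_eq_value_gain[of S0 r S1 "\<lambda>i. \<theta> i * S0 i" \<omega> \<theta>0, OF initial_prices_nonzero]
  by (simp add: initial_prices_nonzero)

lemma strategy_of_excess:
  shows initial_value_strategy_of_excess:
      "initial_value S0 (- sum \<pi> UNIV - c) (\<lambda>i. \<pi> i / S0 i) = - c"
    and terminal_value_strategy_of_excess:
      "terminal_value r S1 (- sum \<pi> UNIV - c) (\<lambda>i. \<pi> i / S0 i) \<omega> = excess r S0 S1 \<pi> \<omega> - (1 + r) * c"
  using excess_eq_value_gain[of S0 r S1 \<pi> \<omega> "- sum \<pi> UNIV - c", OF initial_prices_nonzero]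
  by (simp_all add: initial_prices_nonzero)

lemma rho_arbitrage_WC_iff:
  "rho_arbitrage M (WC M) r S0 S1 \<longleftrightarrow>
    (\<exists>\<psi>. (AE \<omega> in M. excess r S0 S1 \<psi> \<omega> \<ge> 0) \<and> \<not> (AE \<omega> in M. excess r S0 S1 \<psi> \<omega> \<le> 0))"
proof
  assume "rho_arbitrage M (WC M) r S0 S1"
  then have "\<not> rho_efficient M (WC M) r S0 S1 (\<lambda>_. 0)"
    unfolding rho_arbitrage_def by blast
  then obtain \<psi> where WC_nonpos: "WC M (excess r S0 S1 \<psi>) \<le> 0"
    and strict: "integral\<^sup>L M (excess r S0 S1 \<psi>) > 0 \<or> WC M (excess r S0 S1 \<psi>) < 0"
    unfolding rho_efficient_def excess_zero WC_const
    by (auto simp: zero_ereal_def) (metis order.not_eq_order_implies_strict)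
  have nonneg: "AE \<omega> in M. excess r S0 S1 \<psi> \<omega> \<ge> 0"
    using WC_nonpos by (simp add: WC_nonpos_iff)
  have "\<not> (AE \<omega> in M. excess r S0 S1 \<psi> \<omega> \<le> 0)"
  proof
    assume nonpos: "AE \<omega> in M. excess r S0 S1 \<psi> \<omega> \<le> 0"
    with nonneg have "AE \<omega> in M. excess r S0 S1 \<psi> \<omega> = 0"
      by eventually_elim simp
    then have "integral\<^sup>L M (excess r S0 S1 \<psi>) = 0"
      using integral_nonneg_eq_0_iff_AE[OF integrable_excess nonneg] by simp
    moreover have "WC M (\<lambda>_. 0) \<le> WC M (excess r S0 S1 \<psi>)"
      using nonpos by (intro WC_mono_AE) auto
    ultimately show False
      using strict by (simp add: WC_const zero_ereal_def)
  qed
  with nonneg show "\<exists>\<psi>. (AE \<omega> in M. excess r S0 S1 \<psi> \<omega> \<ge> 0) \<and> \<not> (AE \<omega> in M. excess r S0 S1 \<psi> \<omega> \<le> 0)"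
    by blast
next
  assume "\<exists>\<psi>. (AE \<omega> in M. excess r S0 S1 \<psi> \<omega> \<ge> 0) \<and> \<not> (AE \<omega> in M. excess r S0 S1 \<psi> \<omega> \<le> 0)"
  then obtain \<psi> where nonneg: "AE \<omega> in M. excess r S0 S1 \<psi> \<omega> \<ge> 0"
    and nonnull: "\<not> (AE \<omega> in M. excess r S0 S1 \<psi> \<omega> \<le> 0)"
    by blast
  have gain: "integral\<^sup>L M (excess r S0 S1 \<psi>) > 0"
    using integral_pos_of_AE_nonneg[OF integrable_excess nonneg nonnull] .
  have "\<not> rho_efficient M (WC M) r S0 S1 \<pi>" for \<pi>
  proof -
    let ?\<pi>' = "\<lambda>i. \<pi> i + \<psi> i"
    have "integral\<^sup>L M (excess r S0 S1 ?\<pi>') = integral\<^sup>L M (excess r S0 S1 \<pi>) + integral\<^sup>L M (excess r S0 S1 \<psi>)"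
      by (simp add: excess_add integrable_excess)
    moreover have "WC M (excess r S0 S1 ?\<pi>') \<le> WC M (excess r S0 S1 \<pi>)"
      using nonneg by (intro WC_mono_AE) (auto simp: excess_add elim: eventually_mono)
    ultimately show ?thesis
      unfolding rho_efficient_def using gain by force
  qed
  then show "rho_arbitrage M (WC M) r S0 S1"
    unfolding rho_arbitrage_def by blast
qed

lemma strong_rho_arbitrage_WC_iff:
  "strong_rho_arbitrage M (WC M) r S0 S1 \<longleftrightarrow>
    (\<exists>\<psi> c. c > 0 \<and> (AE \<omega> in M. excess r S0 S1 \<psi> \<omega> \<ge> c))"
proof
  assume "strong_rho_arbitrage M (WC M) r S0 S1"
  then obtain \<psi> where "WC M (excess r S0 S1 \<psi>) < WC M (excess r S0 S1 (\<lambda>_. 0))"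
    unfolding strong_rho_arbitrage_def by blast
  then have "WC M (excess r S0 S1 \<psi>) < 0"
    by (simp add: excess_zero WC_const zero_ereal_def)
  then show "\<exists>\<psi> c. c > 0 \<and> (AE \<omega> in M. excess r S0 S1 \<psi> \<omega> \<ge> c)"
    by (auto simp: WC_neg_iff)
next
  assume "\<exists>\<psi> c. c > 0 \<and> (AE \<omega> in M. excess r S0 S1 \<psi> \<omega> \<ge> c)"
  then obtain \<psi> c where "c > 0" and riskless_gain: "AE \<omega> in M. excess r S0 S1 \<psi> \<omega> \<ge> c"
    by blast
  have "\<exists>\<pi>'. integral\<^sup>L M (excess r S0 S1 \<pi>') > integral\<^sup>L M (excess r S0 S1 \<pi>) \<and>
      WC M (excess r S0 S1 \<pi>') < WC M (excess r S0 S1 \<pi>)" for \<pi>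
  proof -
    obtain a where a: "ereal a < WC M (excess r S0 S1 \<pi>)"
      using WC_gt_MInf ereal_dense2 by blast
    define l where "l = (\<bar>integral\<^sup>L M (excess r S0 S1 \<pi>)\<bar> + \<bar>a\<bar> + 1) / c"
    have lc: "l * c = \<bar>integral\<^sup>L M (excess r S0 S1 \<pi>)\<bar> + \<bar>a\<bar> + 1" and "l > 0"
      using \<open>c > 0\<close> by (simp_all add: l_def)
    let ?\<pi>' = "\<lambda>i. l * \<psi> i"
    have scaled_gain: "AE \<omega> in M. excess r S0 S1 ?\<pi>' \<omega> \<ge> l * c"
      using riskless_gain by eventually_elim (use \<open>l > 0\<close> in \<open>simp add: excess_scale\<close>)
    have "integral\<^sup>L M (excess r S0 S1 \<pi>) < l * c"
      using lc by linarith
    also have "\<dots> \<le> integral\<^sup>L M (excess r S0 S1 ?\<pi>')"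
      using integral_ge_const[OF integrable_excess scaled_gain] .
    finally have "integral\<^sup>L M (excess r S0 S1 ?\<pi>') > integral\<^sup>L M (excess r S0 S1 \<pi>)" .
    moreover have "WC M (excess r S0 S1 ?\<pi>') \<le> ereal (- (l * c))"
      using scaled_gain by (simp add: WC_le_iff)
    moreover have "ereal (- (l * c)) < ereal a"
      using lc by simp
    ultimately show ?thesis
      using a by (meson order_le_less_trans order_less_trans)
  qed
  then show "strong_rho_arbitrage M (WC M) r S0 S1"
    unfolding strong_rho_arbitrage_def by blast
qed

lemma arbitrage_first_kind_iff_excess:
  "arbitrage_first_kind M r S0 S1 \<longleftrightarrow>
    (\<exists>\<psi>. (AE \<omega> in M. excess r S0 S1 \<psi> \<omega> \<ge> 0) \<and> \<not> (AE \<omega> in M. excess r S0 S1 \<psi> \<omega> \<le> 0))"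
proof
  assume "arbitrage_first_kind M r S0 S1"
  then obtain \<theta>0 \<theta> where cost: "initial_value S0 \<theta>0 \<theta> \<le> 0"
    and nonneg: "AE \<omega> in M. terminal_value r S1 \<theta>0 \<theta> \<omega> \<ge> 0"
    and pos: "measure M {\<omega> \<in> space M. terminal_value r S1 \<theta>0 \<theta> \<omega> > 0} > 0"
    unfolding arbitrage_first_kind_def by blast
  let ?\<psi> = "\<lambda>i. \<theta> i * S0 i"
  have "(1 + r) * initial_value S0 \<theta>0 \<theta> \<le> 0"
    using cost rate_gt_minus_one by (intro mult_nonneg_nonpos) auto
  then have dominates: "terminal_value r S1 \<theta>0 \<theta> \<omega> \<le> excess r S0 S1 ?\<psi> \<omega>" for \<omega>
    unfolding excess_of_strategy[of \<theta> \<omega> \<theta>0] by linarith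
  have "AE \<omega> in M. excess r S0 S1 ?\<psi> \<omega> \<ge> 0"
    using nonneg by eventually_elim (blast intro: order_trans[OF _ dominates])
  moreover have "\<not> (AE \<omega> in M. excess r S0 S1 ?\<psi> \<omega> \<le> 0)"
  proof
    assume "AE \<omega> in M. excess r S0 S1 ?\<psi> \<omega> \<le> 0"
    then have "AE \<omega> in M. terminal_value r S1 \<theta>0 \<theta> \<omega> \<le> 0"
      by eventually_elim (blast intro: order_trans[OF dominates])
    with pos show False
      by (simp add: measure_pos_iff_not_AE_le)
  qed
  ultimately show "\<exists>\<psi>. (AE \<omega> in M. excess r S0 S1 \<psi> \<omega> \<ge> 0) \<and> \<not> (AE \<omega> in M. excess r S0 S1 \<psi> \<omega> \<le> 0)"
    by blast
next
  assume "\<exists>\<psi>. (AE \<omega> in M. excess r S0 S1 \<psi> \<omega> \<ge> 0) \<and> \<not> (AE \<omega> in M. excess r S0 S1 \<psi> \<omega> \<le> 0)"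
  then obtain \<psi> where nonneg: "AE \<omega> in M. excess r S0 S1 \<psi> \<omega> \<ge> 0"
    and nonnull: "\<not> (AE \<omega> in M. excess r S0 S1 \<psi> \<omega> \<le> 0)"
    by blast
  then show "arbitrage_first_kind M r S0 S1"
    unfolding arbitrage_first_kind_def
    by (intro exI[of _ "- sum \<psi> UNIV - 0"] exI[of _ "\<lambda>i. \<psi> i / S0 i"])
      (unfold strategy_of_excess, simp add: measure_pos_iff_not_AE_le)
qed

lemma arbitrage_second_kind_iff_excess:
  "arbitrage_second_kind M r S0 S1 \<longleftrightarrow>
    (\<exists>\<psi> c. c > 0 \<and> (AE \<omega> in M. excess r S0 S1 \<psi> \<omega> \<ge> c))"
proof
  assume "arbitrage_second_kind M r S0 S1"
  then obtain \<theta>0 \<theta> where cost: "initial_value S0 \<theta>0 \<theta> < 0"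
    and nonneg: "AE \<omega> in M. terminal_value r S1 \<theta>0 \<theta> \<omega> \<ge> 0"
    unfolding arbitrage_second_kind_def by blast
  let ?c = "- ((1 + r) * initial_value S0 \<theta>0 \<theta>)"
  have "(1 + r) * initial_value S0 \<theta>0 \<theta> < 0"
    using cost rate_gt_minus_one by (intro mult_pos_neg) auto
  then have "?c > 0"
    by linarith
  moreover have "AE \<omega> in M. excess r S0 S1 (\<lambda>i. \<theta> i * S0 i) \<omega> \<ge> ?c"
    using nonneg by eventually_elim (simp add: excess_of_strategy[of \<theta> _ \<theta>0])
  ultimately show "\<exists>\<psi> c. c > 0 \<and> (AE \<omega> in M. excess r S0 S1 \<psi> \<omega> \<ge> c)"
    by blast
next
  assume "\<exists>\<psi> c. c > 0 \<and> (AE \<omega> in M. excess r S0 S1 \<psi> \<omega> \<ge> c)"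
  then obtain \<psi> c where "c > 0" and riskless_gain: "AE \<omega> in M. excess r S0 S1 \<psi> \<omega> \<ge> c"
    by blast
  have "1 + r > 0"
    using rate_gt_minus_one by simp
  let ?c = "c / (1 + r)"
  have "initial_value S0 (- sum \<psi> UNIV - ?c) (\<lambda>i. \<psi> i / S0 i) < 0"
    unfolding initial_value_strategy_of_excess using \<open>c > 0\<close> \<open>1 + r > 0\<close> by simp
  moreover have "AE \<omega> in M. terminal_value r S1 (- sum \<psi> UNIV - ?c) (\<lambda>i. \<psi> i / S0 i) \<omega> \<ge> 0"
    unfolding terminal_value_strategy_of_excess using riskless_gain \<open>1 + r > 0\<close> by simp
  ultimately show "arbitrage_second_kind M r S0 S1"
    unfolding arbitrage_second_kind_def by (intro exI conjI)
qed

end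

text \<open>Nonredundancy and the nondegeneracy of expected returns are standing assumptions of the
  market model.\<close>
theorem proposition3p22:
  fixes M :: "'a measure" and r :: real
    and S0 :: "'d::finite \<Rightarrow> real" and S1 :: "'d \<Rightarrow> 'a \<Rightarrow> real"
  assumes "prob_space M"
    and "r > -1"
    and "\<And>i. S0 i > 0"
    and "\<And>i. S1 i \<in> borel_measurable M"
    and "nonredundant M r S0 S1"
    and "\<And>i. integrable M (ret S0 S1 i)"
    and "\<exists>i. integral\<^sup>L M (ret S0 S1 i) \<noteq> r"
  shows "(rho_arbitrage M (WC M) r S0 S1 \<longleftrightarrow> arbitrage_first_kind M r S0 S1)
       \<and> (strong_rho_arbitrage M (WC M) r S0 S1 \<longleftrightarrow> arbitrage_second_kind M r S0 S1)"
proof -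
  interpret one_period_market M r S0 S1
    using assms(1-4,6) by (simp add: one_period_market_def one_period_market_axioms_def)
  show ?thesis
    by (simp add: rho_arbitrage_WC_iff arbitrage_first_kind_iff_excess
        strong_rho_arbitrage_WC_iff arbitrage_second_kind_iff_excess)
qed

end
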